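(* Let $L$ be a finite graded lattice of rank $n$ with an $S_n$ EL-labeling, and let $\mathfrak m$ be a maximal chain of $L$. Then $Q_{\mathfrak m}$ is a sublattice of $L$ (its joins and meets coincide with those of $L$), and it is distributive.
   Context: An $S_n$ EL-labeling: edge-labeling of covering pairs such that each interval has exactly one maximal chain with weakly increasing labels (bottom to top), lexicographically smallest among its maximal chains, and labels along each maximal chain of $L$ form a permutation of $[n]$. $U_i(\mathfrak m)$ ($i\in[n-1]$) is the unique maximal chain agreeing with $\mathfrak m$ except possibly at rank $i$ whose labels have no descent at position $i$. $\mathcal{M}_{\mathfrak m}$ is the set of all chains $U_{i_1}\cdots U_{i_r}(\mathfrak m)$ over all finite sequences (including empty), and $Q_{\mathfrak m}$ is the subposet of $L$ consisting of all elements lying on some chain in $\mathcal{M}_{\mathfrak m}$. *)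

theory Defs
  imports Main
begin

definition covers :: "'a::order \<Rightarrow> 'a \<Rightarrow> bool" where
  "covers x y \<longleftrightarrow> x < y \<and> \<not> (\<exists>z. x < z \<and> z < y)"

definition sat_chain :: "'a::order list \<Rightarrow> bool" where
  "sat_chain c \<longleftrightarrow> c \<noteq> [] \<and> (\<forall>i. Suc i < length c \<longrightarrow> covers (c!i) (c!Suc i))"

definition interval_max_chain :: "'a::order \<Rightarrow> 'a \<Rightarrow> 'a list \<Rightarrow> bool" where
  "interval_max_chain x y c \<longleftrightarrow> sat_chain c \<and> hd c = x \<and> last c = y"

definition max_chain :: "'a::order list \<Rightarrow> bool" where
  "max_chain c \<longleftrightarrow> sat_chain c \<and> (\<forall>z. hd c \<le> z \<and> z \<le> last c)"

definition graded_rank :: "'a::order itself \<Rightarrow> nat \<Rightarrow> bool" where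
  "graded_rank _ n \<longleftrightarrow> (\<forall>c::'a list. max_chain c \<longrightarrow> length c = Suc n)"

definition chain_labels :: "('a \<Rightarrow> 'a \<Rightarrow> nat) \<Rightarrow> 'a list \<Rightarrow> nat list" where
  "chain_labels lab c = map (\<lambda>i. lab (c!i) (c!Suc i)) [0..<length c - 1]"

definition lex_le :: "nat list \<Rightarrow> nat list \<Rightarrow> bool" where
  "lex_le xs ys \<longleftrightarrow> xs = ys \<or> (xs, ys) \<in> lexord {(a, b). a < b}"

definition EL_labeling :: "('a::order \<Rightarrow> 'a \<Rightarrow> nat) \<Rightarrow> bool" where
  "EL_labeling lab \<longleftrightarrow>
     (\<forall>x y. x \<le> y \<longrightarrow>
        (\<exists>!c. interval_max_chain x y c \<and> sorted (chain_labels lab c)) \<and>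
        (\<forall>c c'. interval_max_chain x y c \<and> sorted (chain_labels lab c)
                \<and> interval_max_chain x y c' \<longrightarrow> lex_le (chain_labels lab c) (chain_labels lab c')))"

definition Sn_EL_labeling :: "nat \<Rightarrow> ('a::order \<Rightarrow> 'a \<Rightarrow> nat) \<Rightarrow> bool" where
  "Sn_EL_labeling n lab \<longleftrightarrow> EL_labeling lab \<and>
     (\<forall>c. max_chain c \<longrightarrow> distinct (chain_labels lab c) \<and> set (chain_labels lab c) = {1..n})"

definition U_op :: "('a::order \<Rightarrow> 'a \<Rightarrow> nat) \<Rightarrow> nat \<Rightarrow> 'a list \<Rightarrow> 'a list" where
  "U_op lab i m = (THE m'. max_chain m' \<and> length m' = length m \<and>
       (\<forall>j<length m. j \<noteq> i \<longrightarrow> m'!j = m!j) \<and>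
       lab (m'!(i-1)) (m'!i) \<le> lab (m'!i) (m'!Suc i))"

inductive_set M_chains :: "nat \<Rightarrow> ('a::order \<Rightarrow> 'a \<Rightarrow> nat) \<Rightarrow> 'a list \<Rightarrow> 'a list set"
  for n lab m where
    base: "m \<in> M_chains n lab m"
  | step: "c \<in> M_chains n lab m \<Longrightarrow> 1 \<le> i \<Longrightarrow> i \<le> n - 1 \<Longrightarrow> U_op lab i c \<in> M_chains n lab m"

definition Q_set :: "nat \<Rightarrow> ('a::order \<Rightarrow> 'a \<Rightarrow> nat) \<Rightarrow> 'a list \<Rightarrow> 'a set" where
  "Q_set n lab m = {x. \<exists>c \<in> M_chains n lab m. x \<in> set c}"

end

theory Submission
  imports Defs
begin

text \<open>By the \<open>S\<^sub>n\<close> property, all maximal chains of an interval \<open>[u, v]\<close> carry the same set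
  of labels; write \<open>S(x)\<close> for the label set of \<open>[0, x]\<close>. Then \<open>x < y\<close> implies
  \<open>S(x) \<subset> S(y)\<close>. Order the labels by \<open>a \<prec> b\<close> iff \<open>a < b\<close> and \<open>a\<close> occurs before \<open>b\<close> on \<open>m\<close>.
  Walking up \<open>m\<close> and taking first steps of increasing chains, every down-set \<open>A\<close> of \<open>\<prec>\<close>
  yields an element \<open>E(A)\<close> with \<open>S(E(A)) = A\<close>, and \<open>E\<close> is monotone. Each \<open>U\<^sub>i\<close> replaces an
  element of the chain by the first step of a rank-two interval, which stays of the form
  \<open>E(A)\<close>; conversely, repeatedly removing descents (a bubble sort) reaches every \<open>E(A)\<close>. Hence
  \<open>Q\<^sub>m\<close> is the image of \<open>E\<close>, and since \<open>S\<close> is strictly monotone, joins and meets in \<open>Q\<^sub>m\<close> are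
  \<open>E\<close> of unions and intersections: \<open>Q\<^sub>m\<close> is a sublattice isomorphic to a lattice of sets.\<close>

section \<open>Saturated chains\<close>

lemma covers_less: "covers x y \<Longrightarrow> x < y"
  by (simp add: covers_def)

lemma sat_chain_singleton [simp]: "sat_chain [x]"
  by (simp add: sat_chain_def)

lemma sat_chain_Cons_Cons: "sat_chain (x # y # xs) \<longleftrightarrow> covers x y \<and> sat_chain (y # xs)"
  unfolding sat_chain_def by (auto simp: nth_Cons split: nat.splits)

lemma sat_chain_nonempty: "sat_chain c \<Longrightarrow> c \<noteq> []"
  by (simp add: sat_chain_def)

lemma chain_labels_singleton [simp]: "chain_labels lab [x] = []"
  by (simp add: chain_labels_def)

lemma chain_labels_Cons_Cons [simp]:
  "chain_labels lab (x # y # xs) = lab x y # chain_labels lab (y # xs)"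
  unfolding chain_labels_def by (simp add: upt_conv_Cons map_Suc_upt[symmetric] del: upt_Suc)

lemma length_chain_labels: "length (chain_labels lab c) = length c - 1"
  by (simp add: chain_labels_def)

lemma nth_chain_labels: "j < length c - 1 \<Longrightarrow> chain_labels lab c ! j = lab (c ! j) (c ! Suc j)"
  by (simp add: chain_labels_def)

lemma sat_chain_append_tl:
  "sat_chain c1 \<Longrightarrow> sat_chain c2 \<Longrightarrow> last c1 = hd c2 \<Longrightarrow> sat_chain (c1 @ tl c2)"
proof (induction c1 rule: induct_list012)
  case (2 x)
  then show ?case by (metis append_Cons append_Nil last_ConsL list.collapse sat_chain_nonempty)
next
  case (3 x y zs)
  then show ?case by (simp add: sat_chain_Cons_Cons)
qed (simp add: sat_chain_def)

lemma chain_labels_append_tl: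
  "c1 \<noteq> [] \<Longrightarrow> c2 \<noteq> [] \<Longrightarrow> last c1 = hd c2 \<Longrightarrow>
     chain_labels lab (c1 @ tl c2) = chain_labels lab c1 @ chain_labels lab c2"
proof (induction c1 rule: induct_list012)
  case (2 x)
  then show ?case by (metis append_Cons append_Nil chain_labels_singleton last_ConsL list.collapse)
next
  case (3 x y zs)
  then show ?case by simp
qed simp

lemma interval_max_chain_append_tl:
  assumes "interval_max_chain x y c1" and "interval_max_chain y z c2"
  shows "interval_max_chain x z (c1 @ tl c2)"
proof -
  have "c1 \<noteq> []" "c2 \<noteq> []"
    using assms sat_chain_nonempty unfolding interval_max_chain_def by auto
  moreover have "last (c1 @ tl c2) = last c2"
  proof (cases "tl c2 = []")
    case True
    then show ?thesis
      using assms \<open>c2 \<noteq> []\<close> unfolding interval_max_chain_def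
      by (metis append_Nil2 last_ConsL list.collapse)
  next
    case False
    then show ?thesis by (simp add: last_tl)
  qed
  ultimately show ?thesis
    using assms sat_chain_append_tl[of c1 c2] unfolding interval_max_chain_def by auto
qed

lemma sat_chain_nth_less:
  assumes "sat_chain c" "i < j" "j < length c"
  shows "c ! i < c ! j"
  using assms(2,3)
proof (induction j)
  case (Suc j)
  have "c ! j < c ! Suc j"
    using assms(1) Suc.prems covers_less unfolding sat_chain_def by blast
  then show ?case
    using Suc by (cases "i = j") auto
qed simp

lemma sat_chain_nth_le: "sat_chain c \<Longrightarrow> i \<le> j \<Longrightarrow> j < length c \<Longrightarrow> c ! i \<le> c ! j"
  using sat_chain_nth_less[of c i j] by (cases "i = j") auto

lemma interval_max_chain_bounds:
  assumes "interval_max_chain x y c" "z \<in> set c"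
  shows "x \<le> z" "z \<le> y"
proof -
  obtain i where i: "i < length c" "z = c ! i"
    using assms(2) by (metis in_set_conv_nth)
  have "c \<noteq> []" "sat_chain c" "x = c ! 0" "y = c ! (length c - 1)"
    using assms(1) sat_chain_nonempty[of c] unfolding interval_max_chain_def
    by (auto simp: hd_conv_nth last_conv_nth)
  then show "x \<le> z" "z \<le> y"
    using sat_chain_nth_le[of c 0 i] sat_chain_nth_le[of c i "length c - 1"] i by auto
qed

lemma interval_max_chain_le:
  assumes "interval_max_chain x y c"
  shows "x \<le> y"
proof -
  have "x \<in> set c"
    using assms sat_chain_nonempty[of c] unfolding interval_max_chain_def by auto
  then show ?thesis
    using interval_max_chain_bounds[OF assms] by blast
qed

lemma interval_max_chain_exists:
  fixes x y :: "'a::{finite,order}"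
  assumes "x \<le> y"
  shows "\<exists>c. interval_max_chain x y c"
  using assms
proof (induction "card {z. x < z \<and> z \<le> y}" arbitrary: x rule: less_induct)
  case less
  show ?case
  proof (cases "x = y")
    case True
    have "interval_max_chain x y [x]"
      using True by (simp add: interval_max_chain_def)
    then show ?thesis ..
  next
    case False
    define A where "A = {z. x < z \<and> z \<le> y}"
    have "y \<in> A"
      using False less.prems unfolding A_def by simp
    then have "A \<noteq> {}" by blast
    then obtain x' where "x' \<in> A" and x'_min: "\<forall>z\<in>A. z \<le> x' \<longrightarrow> x' = z"
      using finite_has_minimal[OF finite] by blast
    have "x < x'" "x' \<le> y"
      using \<open>x' \<in> A\<close> unfolding A_def by auto
    have "\<not> (x < z \<and> z < x')" for z
    proof
      assume "x < z \<and> z < x'"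
      then have "z \<in> A"
        using \<open>x' \<le> y\<close> unfolding A_def by (auto intro: order.trans)
      then show False
        using x'_min \<open>x < z \<and> z < x'\<close> by fastforce
    qed
    then have "covers x x'"
      using \<open>x < x'\<close> unfolding covers_def by blast
    have "{z. x' < z \<and> z \<le> y} \<subset> A"
      using \<open>x' \<in> A\<close> unfolding A_def by auto
    then have "card {z. x' < z \<and> z \<le> y} < card A"
      by (simp add: psubset_card_mono)
    then obtain c where c: "interval_max_chain x' y c"
      using less.hyps \<open>x' \<le> y\<close> unfolding A_def by blast
    have "interval_max_chain x x' [x, x']"
      using \<open>covers x x'\<close> by (simp add: interval_max_chain_def sat_chain_Cons_Cons)
    then have "interval_max_chain x y ([x, x'] @ tl c)"
      using c by (rule interval_max_chain_append_tl)
    then show ?thesis ..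
  qed
qed

lemma sat_chain_list_update:
  assumes "sat_chain c" "0 < i" "Suc i < length c"
    and "covers (c ! (i - 1)) z" "covers z (c ! Suc i)"
  shows "sat_chain (c[i := z])"
  unfolding sat_chain_def
proof (intro conjI allI impI)
  show "c[i := z] \<noteq> []"
    using assms(3) by auto
  fix j
  assume "Suc j < length (c[i := z])"
  then have "Suc j < length c" by simp
  consider "Suc j = i" | "j = i" | "Suc j \<noteq> i" "j \<noteq> i" by blast
  then show "covers (c[i := z] ! j) (c[i := z] ! Suc j)"
  proof cases
    case 1
    then show ?thesis using assms(3,4) by auto
  next
    case 2
    then show ?thesis using assms(3,5) by auto
  next
    case 3
    then show ?thesis using assms(1) \<open>Suc j < length c\<close> unfolding sat_chain_def by simp
  qed
qed

lemma interval_max_chain_segment: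
  assumes "sat_chain c" "r \<le> s" "s < length c"
  shows "interval_max_chain (c ! r) (c ! s) (drop r (take (Suc s) c))"
  unfolding interval_max_chain_def sat_chain_def
proof (intro conjI allI impI)
  let ?d = "drop r (take (Suc s) c)"
  have length_d: "length ?d = Suc (s - r)"
    using assms by simp
  then show "?d \<noteq> []" by auto
  show "hd ?d = c ! r" "last ?d = c ! s"
    using assms length_d by (auto simp: hd_conv_nth last_conv_nth)
  fix j
  assume "Suc j < length ?d"
  then show "covers (?d ! j) (?d ! Suc j)"
    using assms length_d unfolding sat_chain_def by auto
qed

section \<open>Label sets of intervals\<close>

locale Sn_EL_lattice =
  fixes lab :: "'a::{finite,lattice} \<Rightarrow> 'a \<Rightarrow> nat" and n :: nat
  assumes graded: "graded_rank TYPE('a) n"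
    and Sn_EL: "Sn_EL_labeling n lab"
begin

definition least :: 'a where
  "least = Inf_fin UNIV"

definition greatest :: 'a where
  "greatest = Sup_fin UNIV"

lemma least_le [simp]: "least \<le> x"
  unfolding least_def by (simp add: Inf_fin.coboundedI)

lemma le_greatest [simp]: "x \<le> greatest"
  unfolding greatest_def by (simp add: Sup_fin.coboundedI)

lemma max_chain_iff: "max_chain c \<longleftrightarrow> interval_max_chain least greatest c"
  unfolding max_chain_def interval_max_chain_def by (auto intro: order.antisym)

lemma length_max_chain: "max_chain (c :: 'a list) \<Longrightarrow> length c = Suc n"
  using graded unfolding graded_rank_def by blast

lemma max_chain_labels:
  assumes "max_chain c"
  shows "distinct (chain_labels lab c)" and "set (chain_labels lab c) = {1..n}"
  using Sn_EL assms unfolding Sn_EL_labeling_def by blast+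

lemma
  assumes "max_chain (c :: 'a list)"
  shows max_chain_nth_0: "c ! 0 = least"
    and max_chain_nth_n: "c ! n = greatest"
proof -
  have "length c = Suc n"
    using assms by (rule length_max_chain)
  then have "c \<noteq> []" by auto
  with \<open>length c = Suc n\<close> show "c ! 0 = least" "c ! n = greatest"
    using assms unfolding max_chain_iff interval_max_chain_def
    by (simp_all add: hd_conv_nth last_conv_nth)
qed

lemma chain_labels_complement:
  assumes "interval_max_chain least u p" "interval_max_chain u v c"
    and "interval_max_chain v greatest s"
  shows "distinct (chain_labels lab c)"
    and "set (chain_labels lab c) = {1..n} - set (chain_labels lab p) - set (chain_labels lab s)"
proof -
  have nonempty: "p \<noteq> []" "c \<noteq> []" "s \<noteq> []"
    using assms sat_chain_nonempty unfolding interval_max_chain_def by auto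
  have "last (p @ tl c) = hd s"
    using interval_max_chain_append_tl[OF assms(1,2)] assms(3)
    unfolding interval_max_chain_def by simp
  then have "chain_labels lab ((p @ tl c) @ tl s) =
      chain_labels lab (p @ tl c) @ chain_labels lab s"
    using nonempty by (intro chain_labels_append_tl) simp_all
  also have "\<dots> = chain_labels lab p @ chain_labels lab c @ chain_labels lab s"
    using assms nonempty unfolding interval_max_chain_def by (simp add: chain_labels_append_tl)
  finally have labels_concat: "chain_labels lab ((p @ tl c) @ tl s) =
      chain_labels lab p @ chain_labels lab c @ chain_labels lab s" .
  have "max_chain ((p @ tl c) @ tl s)"
    unfolding max_chain_iff using assms by (blast intro: interval_max_chain_append_tl)
  from max_chain_labels[OF this, unfolded labels_concat]
  show "distinct (chain_labels lab c)"
    and "set (chain_labels lab c) = {1..n} - set (chain_labels lab p) - set (chain_labels lab s)"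
    by auto
qed

text \<open>Well defined by \<open>chain_labels_complement\<close>: all maximal chains of \<open>[u, v]\<close> have the same
  label set.\<close>
definition labels :: "'a \<Rightarrow> 'a \<Rightarrow> nat set" where
  "labels u v = set (chain_labels lab (SOME c. interval_max_chain u v c))"

lemma interval_max_chain_extends:
  assumes "interval_max_chain u v c"
  obtains p s where "interval_max_chain least u p" "interval_max_chain v greatest s"
  using interval_max_chain_exists[OF least_le[of u]] interval_max_chain_exists[OF le_greatest[of v]]
  by blast

lemma set_chain_labels:
  assumes "interval_max_chain u v c"
  shows "set (chain_labels lab c) = labels u v"
proof -
  let ?c = "SOME c. interval_max_chain u v c"
  have "interval_max_chain u v ?c"
    using assms by (rule someI)
  moreover obtain p s
    where p: "interval_max_chain least u p" and s: "interval_max_chain v greatest s"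
    using assms by (rule interval_max_chain_extends)
  ultimately show ?thesis
    using chain_labels_complement(2)[OF p _ s] assms unfolding labels_def by simp
qed

lemma distinct_chain_labels:
  assumes "interval_max_chain u v c"
  shows "distinct (chain_labels lab c)"
proof -
  obtain p s where "interval_max_chain least u p" "interval_max_chain v greatest s"
    using assms by (rule interval_max_chain_extends)
  then show ?thesis
    using chain_labels_complement(1) assms by blast
qed

lemma length_interval_max_chain:
  assumes "interval_max_chain u v c"
  shows "length c = Suc (card (labels u v))"
proof -
  have "card (labels u v) = length (chain_labels lab c)"
    using distinct_card[OF distinct_chain_labels[OF assms]] set_chain_labels[OF assms] by simp
  moreover have "c \<noteq> []"
    using assms sat_chain_nonempty unfolding interval_max_chain_def by blast
  ultimately show ?thesis
    by (simp add: length_chain_labels)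
qed

lemma
  assumes "u \<le> v" "v \<le> w"
  shows labels_trans: "labels u w = labels u v \<union> labels v w"
    and labels_disjoint: "labels u v \<inter> labels v w = {}"
proof -
  obtain c1 c2 where c1: "interval_max_chain u v c1" and c2: "interval_max_chain v w c2"
    using assms interval_max_chain_exists by metis
  then have c: "interval_max_chain u w (c1 @ tl c2)"
    by (rule interval_max_chain_append_tl)
  have "chain_labels lab (c1 @ tl c2) = chain_labels lab c1 @ chain_labels lab c2"
    using c1 c2 sat_chain_nonempty unfolding interval_max_chain_def
    by (intro chain_labels_append_tl) auto
  then show "labels u w = labels u v \<union> labels v w" "labels u v \<inter> labels v w = {}"
    using set_chain_labels[OF c] distinct_chain_labels[OF c] set_chain_labels[OF c1]
      set_chain_labels[OF c2] by auto
qed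

lemma labels_covers: "covers u v \<Longrightarrow> labels u v = {lab u v}"
  using set_chain_labels[of u v "[u, v]"] by (simp add: interval_max_chain_def sat_chain_Cons_Cons)

lemma labels_refl [simp]: "labels u u = {}"
  using set_chain_labels[of u u "[u]"] by (simp add: interval_max_chain_def)

lemma labels_nonempty:
  assumes "u < v"
  shows "labels u v \<noteq> {}"
proof -
  obtain c where c: "interval_max_chain u v c"
    using assms interval_max_chain_exists by (meson less_imp_le)
  then have "length c \<noteq> 1"
    using assms unfolding interval_max_chain_def by (cases c) auto
  then show ?thesis
    using length_interval_max_chain[OF c] by auto
qed

definition down_labels :: "'a \<Rightarrow> nat set" where
  "down_labels z = labels least z"

lemma down_labels_least [simp]: "down_labels least = {}"
  by (simp add: down_labels_def)

lemma finite_down_labels [simp]: "finite (down_labels z)"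
  by (simp add: down_labels_def labels_def)

lemma labels_eq_diff: "u \<le> v \<Longrightarrow> labels u v = down_labels v - down_labels u"
  unfolding down_labels_def
  using labels_trans[OF least_le, of u v] labels_disjoint[OF least_le, of u v] by auto

lemma down_labels_mono: "u \<le> v \<Longrightarrow> down_labels u \<subseteq> down_labels v"
  unfolding down_labels_def using labels_trans[OF least_le, of u v] by auto

lemma down_labels_strict_mono:
  assumes "u < v"
  shows "down_labels u \<subset> down_labels v"
  using down_labels_mono[of u v] labels_eq_diff[of u v] labels_nonempty[OF assms]
    less_imp_le[OF assms] by auto

lemma down_labels_antisym:
  assumes "u \<le> v" "down_labels v \<subseteq> down_labels u"
  shows "u = v"
proof (rule ccontr)
  assume "u \<noteq> v"
  then have "down_labels u \<subset> down_labels v"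
    using assms(1) by (simp add: down_labels_strict_mono)
  then show False
    using assms(2) by blast
qed

lemma covers_if_card_down_labels:
  assumes "u \<le> v" and "card (down_labels v) = Suc (card (down_labels u))"
  shows "covers u v"
proof -
  have "\<not> (u < z \<and> z < v)" for z
  proof
    assume "u < z \<and> z < v"
    then have "card (down_labels u) < card (down_labels z)"
      and "card (down_labels z) < card (down_labels v)"
      by (simp_all add: down_labels_strict_mono psubset_card_mono)
    then show False
      using assms(2) by simp
  qed
  moreover have "u < v"
    using assms by (cases "u = v") auto
  ultimately show ?thesis
    unfolding covers_def by blast
qed

lemma
  assumes "covers u v"
  shows down_labels_covers: "down_labels v = insert (lab u v) (down_labels u)"
    and lab_notin_down_labels: "lab u v \<notin> down_labels u"
proof -
  have "u \<le> v"
    using covers_less[OF assms] by simp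
  then have "down_labels v - down_labels u = {lab u v}" "down_labels u \<subseteq> down_labels v"
    using labels_eq_diff[of u v] down_labels_mono[of u v] labels_covers[OF assms] by simp_all
  then show "down_labels v = insert (lab u v) (down_labels u)" "lab u v \<notin> down_labels u"
    by blast+
qed

lemma card_down_labels_max_chain:
  assumes "max_chain c" "r \<le> n"
  shows "card (down_labels (c ! r)) = r"
proof -
  have c: "interval_max_chain least greatest c" "length c = Suc n"
    using assms(1) max_chain_iff length_max_chain by blast+
  then have "interval_max_chain least (c ! r) (take (Suc r) c)"
    using interval_max_chain_segment[of c 0 r] c assms max_chain_nth_0
    unfolding interval_max_chain_def by simp
  from length_interval_max_chain[OF this] show ?thesis
    using c assms(2) by (simp add: down_labels_def)
qed

section \<open>Increasing chains and the operators \<open>U\<^sub>i\<close>\<close>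

definition increasing_chain :: "'a \<Rightarrow> 'a \<Rightarrow> 'a list" where
  "increasing_chain u v = (THE c. interval_max_chain u v c \<and> sorted (chain_labels lab c))"

lemma increasing_chain_ex1:
  "u \<le> v \<Longrightarrow> \<exists>!c. interval_max_chain u v c \<and> sorted (chain_labels lab c)"
  using Sn_EL unfolding Sn_EL_labeling_def EL_labeling_def by blast

lemma
  assumes "u \<le> v"
  shows interval_max_chain_increasing_chain: "interval_max_chain u v (increasing_chain u v)"
    and sorted_increasing_chain: "sorted (chain_labels lab (increasing_chain u v))"
  using theI'[OF increasing_chain_ex1[OF assms]] unfolding increasing_chain_def by blast+

lemma increasing_chain_unique:
  assumes "interval_max_chain u v c" "sorted (chain_labels lab c)"
  shows "c = increasing_chain u v"
  unfolding increasing_chain_def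
  using the1_equality[OF increasing_chain_ex1[OF interval_max_chain_le[OF assms(1)]]] assms by blast

definition first_step :: "'a \<Rightarrow> 'a \<Rightarrow> 'a" where
  "first_step u v = increasing_chain u v ! 1"

lemma increasing_chain_eq_Cons:
  assumes "u < v"
  obtains rest where "increasing_chain u v = u # first_step u v # rest"
proof -
  let ?c = "increasing_chain u v"
  have c: "interval_max_chain u v ?c"
    using assms by (simp add: interval_max_chain_increasing_chain)
  then have "?c \<noteq> []" "hd ?c = u"
    using sat_chain_nonempty unfolding interval_max_chain_def by auto
  moreover have "length ?c \<noteq> 1"
    using c assms unfolding interval_max_chain_def by (cases ?c) auto
  ultimately obtain w rest where "?c = u # w # rest"
    by (metis One_nat_def length_Cons list.exhaust_sel list.size(3))
  then show ?thesis
    using that by (simp add: first_step_def)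
qed

lemma
  assumes "u < v"
  shows covers_first_step: "covers u (first_step u v)"
    and first_step_le: "first_step u v \<le> v"
    and lab_first_step_mem: "lab u (first_step u v) \<in> labels u v"
    and lab_first_step_le: "l \<in> labels u v \<Longrightarrow> lab u (first_step u v) \<le> l"
proof -
  let ?w = "first_step u v"
  obtain rest where c_eq: "increasing_chain u v = u # ?w # rest"
    using assms by (rule increasing_chain_eq_Cons)
  have c: "interval_max_chain u v (u # ?w # rest)" "sorted (chain_labels lab (u # ?w # rest))"
    using assms interval_max_chain_increasing_chain sorted_increasing_chain c_eq
    by (metis less_imp_le)+
  then show "covers u ?w"
    unfolding interval_max_chain_def by (simp add: sat_chain_Cons_Cons)
  show "?w \<le> v"
    using interval_max_chain_bounds(2)[OF c(1)] by simp
  have "labels u v = insert (lab u ?w) (set (chain_labels lab (?w # rest)))"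
    using set_chain_labels[OF c(1)] by simp
  then show "lab u ?w \<in> labels u v" "l \<in> labels u v \<Longrightarrow> lab u ?w \<le> l"
    using c(2) by auto
qed

text \<open>Prefixing the atom of \<open>[u, y]\<close> to the increasing chain of \<open>[atom, x]\<close> gives an
  increasing chain of \<open>[u, x]\<close> as soon as \<open>[u, y]\<close> carries the smallest label of \<open>[u, x]\<close>.\<close>
lemma first_step_eq_if_min_label:
  assumes "u < y" "y \<le> x" "l \<in> labels u y" "\<forall>l' \<in> labels u x. l \<le> l'"
  shows "first_step u y = first_step u x"
proof -
  let ?w = "first_step u y"
  have "covers u ?w" "lab u ?w \<le> l"
    using assms covers_first_step lab_first_step_le by blast+
  have "?w \<le> x"
    using first_step_le[OF assms(1)] assms(2) by (rule order.trans)
  let ?d = "increasing_chain ?w x"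
  have d: "interval_max_chain ?w x ?d" "sorted (chain_labels lab ?d)"
    using \<open>?w \<le> x\<close> interval_max_chain_increasing_chain sorted_increasing_chain by blast+
  then obtain tail where d_eq: "?d = ?w # tail"
    unfolding interval_max_chain_def by (metis list.collapse sat_chain_nonempty)
  have "interval_max_chain u ?w [u, ?w]"
    using \<open>covers u ?w\<close> by (simp add: interval_max_chain_def sat_chain_Cons_Cons)
  from interval_max_chain_append_tl[OF this d(1)]
  have chain: "interval_max_chain u x (u # ?d)"
    using d_eq by simp
  have "labels ?w x \<subseteq> labels u x"
    using labels_trans[of u ?w x] covers_less[OF \<open>covers u ?w\<close>] \<open>?w \<le> x\<close> by auto
  then have "lab u ?w \<le> l'" if "l' \<in> set (chain_labels lab ?d)" for l'
    using that set_chain_labels[OF d(1)] assms(4) \<open>lab u ?w \<le> l\<close> by fastforce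
  then have "sorted (chain_labels lab (u # ?d))"
    using d d_eq by simp
  then have "increasing_chain u x = u # ?w # tail"
    using chain increasing_chain_unique d_eq by metis
  then show ?thesis
    by (simp add: first_step_def[of u x])
qed

lemma first_step_covers:
  assumes "covers u v"
  shows "first_step u v = v"
proof -
  have "[u, v] = increasing_chain u v"
    using assms
    by (intro increasing_chain_unique) (simp_all add: interval_max_chain_def sat_chain_Cons_Cons)
  then show ?thesis
    unfolding first_step_def by (metis nth_Cons_0 nth_Cons_Suc One_nat_def)
qed

lemma rank2_labels: "covers u y \<Longrightarrow> covers y v \<Longrightarrow> labels u v = {lab u y, lab y v}"
  using set_chain_labels[of u v "[u, y, v]"]
  by (simp add: interval_max_chain_def sat_chain_Cons_Cons)

lemma rank2_increasing_chain:
  assumes "covers u y" "covers y v"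
  shows "increasing_chain u v = [u, first_step u v, v]"
proof -
  have uyv: "interval_max_chain u v [u, y, v]"
    using assms by (simp add: interval_max_chain_def sat_chain_Cons_Cons)
  then have c: "interval_max_chain u v (increasing_chain u v)"
    by (simp add: interval_max_chain_le interval_max_chain_increasing_chain)
  have "length (increasing_chain u v) = 3"
    using length_interval_max_chain[OF c] length_interval_max_chain[OF uyv] by simp
  then obtain a b d where abd: "increasing_chain u v = [a, b, d]"
    by (metis (no_types) length_0_conv length_Suc_conv numeral_3_eq_3)
  then show ?thesis
    using c unfolding interval_max_chain_def first_step_def by simp
qed

lemma
  assumes "covers u y" "covers y v"
  shows rank2_covers_first_step: "covers u (first_step u v)"
    and rank2_first_step_covers: "covers (first_step u v) v"
    and rank2_first_step_lab_less: "lab u (first_step u v) < lab (first_step u v) v"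
    and rank2_labels_first_step: "labels u v = {lab u (first_step u v), lab (first_step u v) v}"
proof -
  let ?z = "first_step u v"
  have u_le_v: "u \<le> v"
    using covers_less[OF assms(1)] covers_less[OF assms(2)] by simp
  then have c: "interval_max_chain u v [u, ?z, v]" "sorted (chain_labels lab [u, ?z, v])"
    using interval_max_chain_increasing_chain sorted_increasing_chain
      rank2_increasing_chain[OF assms] by metis+
  then show "covers u ?z" "covers ?z v"
    unfolding interval_max_chain_def by (simp_all add: sat_chain_Cons_Cons)
  show "lab u ?z < lab ?z v"
    using c distinct_chain_labels[OF c(1)] by simp
  show "labels u v = {lab u ?z, lab ?z v}"
    using set_chain_labels[OF c(1)] by simp
qed

lemma rank2_first_step_iff:
  assumes "covers u y" "covers y v"
  shows "y = first_step u v \<longleftrightarrow> lab u y \<le> lab y v"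
proof
  assume "y = first_step u v"
  then show "lab u y \<le> lab y v"
    using rank2_first_step_lab_less[OF assms] by simp
next
  assume "lab u y \<le> lab y v"
  then have "[u, y, v] = increasing_chain u v"
    using assms
    by (intro increasing_chain_unique) (simp_all add: interval_max_chain_def sat_chain_Cons_Cons)
  then show "y = first_step u v"
    using rank2_increasing_chain[OF assms] by simp
qed

lemma rank2_first_step_swaps_labels:
  assumes "covers u y" "covers y v" "lab y v < lab u y"
  shows "lab u (first_step u v) = lab y v" "lab (first_step u v) v = lab u y"
  using rank2_labels[OF assms(1,2)] rank2_labels_first_step[OF assms(1,2)]
    rank2_first_step_lab_less[OF assms(1,2)] assms(3)
  by (metis doubleton_eq_iff not_less_iff_gr_or_eq)+

lemma max_chain_covers: "max_chain (c :: 'a list) \<Longrightarrow> j < n \<Longrightarrow> covers (c ! j) (c ! Suc j)"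
  using length_max_chain max_chain_iff unfolding interval_max_chain_def sat_chain_def
  by (metis Suc_less_eq)

lemma max_chain_list_update:
  assumes "max_chain (c :: 'a list)" "0 < i" "i < n"
    and "covers (c ! (i - 1)) z" "covers z (c ! Suc i)"
  shows "max_chain (c[i := z])"
proof -
  have c: "interval_max_chain least greatest c" "length c = Suc n"
    using assms(1) max_chain_iff length_max_chain by blast+
  then have "sat_chain (c[i := z])"
    using assms by (intro sat_chain_list_update) (simp_all add: interval_max_chain_def)
  moreover have "c \<noteq> []"
    using c(2) by auto
  then have "hd (c[i := z]) = hd c" "last (c[i := z]) = last c"
    using c(2) assms(2,3) by (simp_all add: hd_conv_nth last_conv_nth)
  ultimately show ?thesis
    using c(1) unfolding max_chain_iff interval_max_chain_def by simp
qed

lemma U_op_eq: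
  assumes c: "max_chain (c :: 'a list)" and i: "0 < i" "i < n"
  shows "U_op lab i c = c[i := first_step (c ! (i - 1)) (c ! Suc i)]"
proof -
  let ?u = "c ! (i - 1)" and ?v = "c ! Suc i"
  let ?z = "first_step ?u ?v"
  have len: "length c = Suc n"
    using c length_max_chain by blast
  have cov: "covers ?u (c ! i)" "covers (c ! i) ?v"
    using max_chain_covers[OF c, of "i - 1"] max_chain_covers[OF c, of i] i by simp_all
  let ?P = "\<lambda>d. max_chain d \<and> length d = length c \<and> (\<forall>j<length c. j \<noteq> i \<longrightarrow> d ! j = c ! j) \<and>
       lab (d ! (i - 1)) (d ! i) \<le> lab (d ! i) (d ! Suc i)"
  have "?P (c[i := ?z])"
  proof (intro conjI allI impI)
    show "max_chain (c[i := ?z])"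
      using max_chain_list_update[OF c i] rank2_covers_first_step[OF cov]
        rank2_first_step_covers[OF cov] by blast
  next
    show "lab (c[i := ?z] ! (i - 1)) (c[i := ?z] ! i) \<le> lab (c[i := ?z] ! i) (c[i := ?z] ! Suc i)"
      using rank2_first_step_lab_less[OF cov] len i by simp
  qed simp_all
  moreover have "d = c[i := ?z]" if d: "?P d" for d
  proof (rule nth_equalityI)
    show "length d = length (c[i := ?z])"
      using d by simp
    have "d ! (i - 1) = ?u" "d ! Suc i = ?v"
      using d len i by auto
    then have "covers ?u (d ! i)" "covers (d ! i) ?v"
      using max_chain_covers[of d "i - 1"] max_chain_covers[of d i] d i by auto
    then have "d ! i = ?z"
      using d rank2_first_step_iff \<open>d ! (i - 1) = ?u\<close> \<open>d ! Suc i = ?v\<close> by metis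
    then show "d ! j = c[i := ?z] ! j" if "j < length d" for j
      using d that len by (cases "j = i") auto
  qed
  ultimately show ?thesis
    unfolding U_op_def by (rule the_equality)
qed

lemma max_chain_U_op:
  assumes "max_chain (c :: 'a list)" "0 < i" "i < n"
  shows "max_chain (U_op lab i c)"
proof -
  have cov: "covers (c ! (i - 1)) (c ! i)" "covers (c ! i) (c ! Suc i)"
    using max_chain_covers[OF assms(1), of "i - 1"] max_chain_covers[OF assms(1), of i] assms(2,3)
    by simp_all
  show ?thesis
    unfolding U_op_eq[OF assms]
    using max_chain_list_update[OF assms] rank2_covers_first_step[OF cov]
      rank2_first_step_covers[OF cov] by blast
qed

text \<open>Swapping a descent moves the larger label one position up, so this weight increases.\<close>
definition label_weight :: "'a list \<Rightarrow> nat" where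
  "label_weight c = (\<Sum>j<n. j * lab (c ! j) (c ! Suc j))"

lemma label_weight_U_op_less:
  assumes c: "max_chain (c :: 'a list)" and i: "0 < i" "i < n"
    and descent: "lab (c ! i) (c ! Suc i) < lab (c ! (i - 1)) (c ! i)"
  shows "label_weight c < label_weight (U_op lab i c)"
proof -
  let ?u = "c ! (i - 1)" and ?y = "c ! i" and ?v = "c ! Suc i"
  let ?d = "U_op lab i c"
  have len: "length c = Suc n"
    using c length_max_chain by blast
  have cov: "covers ?u ?y" "covers ?y ?v"
    using max_chain_covers[OF c, of "i - 1"] max_chain_covers[OF c, of i] i by simp_all
  have d: "?d = c[i := first_step ?u ?v]"
    using U_op_eq[OF c i] .
  have split: "(\<Sum>j<n. h j) = (\<Sum>j\<in>{..<n} - {i - 1, i}. h j) + h (i - 1) + h i" for h :: "nat \<Rightarrow> nat"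
    using sum.subset_diff[of "{i - 1, i}" "{..<n}" h] i by auto
  have "(\<Sum>j\<in>{..<n} - {i - 1, i}. j * lab (?d ! j) (?d ! Suc j)) =
      (\<Sum>j\<in>{..<n} - {i - 1, i}. j * lab (c ! j) (c ! Suc j))"
    unfolding d by (intro sum.cong) auto
  moreover have "?d ! (i - 1) = ?u" "?d ! i = first_step ?u ?v" "?d ! Suc i = ?v"
    unfolding d using len i by auto
  moreover have "(i - 1) * lab ?u ?y + i * lab ?y ?v < (i - 1) * lab ?y ?v + i * lab ?u ?y"
    using descent i by (cases i) auto
  ultimately show ?thesis
    unfolding label_weight_def split[of "\<lambda>j. j * lab (c ! j) (c ! Suc j)"]
      split[of "\<lambda>j. j * lab (?d ! j) (?d ! Suc j)"]
    using rank2_first_step_swaps_labels[OF cov descent] i by simp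
qed

end

section \<open>Label ideals of a maximal chain\<close>

locale Sn_EL_chain = Sn_EL_lattice +
  fixes m :: "'a list"
  assumes max_chain_m: "max_chain m"
begin

definition m_lab :: "nat \<Rightarrow> nat" where
  "m_lab j = lab (m ! (j - 1)) (m ! j)"

definition m_labs :: "nat \<Rightarrow> nat set" where
  "m_labs k = m_lab ` {1..k}"

lemma length_m: "length m = Suc n"
  using max_chain_m length_max_chain by blast

lemma m_lab_inj:
  assumes "0 < i" "i \<le> n" "0 < j" "j \<le> n" "m_lab i = m_lab j"
  shows "i = j"
proof -
  have "chain_labels lab m ! (i - 1) = chain_labels lab m ! (j - 1)"
    using assms length_m nth_chain_labels[of _ m lab] unfolding m_lab_def by simp
  moreover have "length (chain_labels lab m) = n"
    using length_m by (simp add: length_chain_labels)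
  ultimately show ?thesis
    using max_chain_labels(1)[OF max_chain_m] assms by (simp add: nth_eq_iff_index_eq)
qed

lemma m_labs_0 [simp]: "m_labs 0 = {}"
  by (simp add: m_labs_def)

lemma m_labs_Suc: "m_labs (Suc k) = insert (m_lab (Suc k)) (m_labs k)"
  unfolding m_labs_def by (simp add: atLeastAtMostSuc_conv)

lemma finite_m_labs [simp]: "finite (m_labs k)"
  by (simp add: m_labs_def)

lemma m_lab_notin_m_labs:
  assumes "k \<le> j" "j < n"
  shows "m_lab (Suc j) \<notin> m_labs k"
proof
  assume "m_lab (Suc j) \<in> m_labs k"
  then obtain i where "i \<in> {1..k}" "m_lab (Suc j) = m_lab i"
    unfolding m_labs_def by blast
  then show False
    using m_lab_inj[of "Suc j" i] assms by simp
qed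

lemma card_m_labs: "k \<le> n \<Longrightarrow> card (m_labs k) = k"
  by (induction k) (simp_all add: m_labs_Suc m_lab_notin_m_labs)

lemma down_labels_nth_m: "k \<le> n \<Longrightarrow> down_labels (m ! k) = m_labs k"
proof (induction k)
  case 0
  then show ?case
    using max_chain_nth_0[OF max_chain_m] by simp
next
  case (Suc k)
  then show ?case
    using down_labels_covers[OF max_chain_covers[OF max_chain_m, of k]]
    by (simp add: m_labs_Suc m_lab_def)
qed

lemma down_labels_subset_m_labs: "down_labels z \<subseteq> m_labs n"
  using down_labels_mono[OF le_greatest, of z] down_labels_nth_m[of n]
    max_chain_nth_n[OF max_chain_m] by simp

text \<open>Down-sets of \<open>\<prec>\<close>, expressed through the positions \<open>i < j\<close> of two labels along \<open>m\<close>.\<close>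
definition label_ideal :: "nat set \<Rightarrow> bool" where
  "label_ideal A \<longleftrightarrow>
     (\<forall>i j. 0 < i \<longrightarrow> i < j \<longrightarrow> j \<le> n \<longrightarrow> m_lab j \<in> A \<longrightarrow> m_lab i < m_lab j \<longrightarrow> m_lab i \<in> A)"

lemma label_ideal_m_labs:
  assumes "k \<le> n"
  shows "label_ideal (m_labs k)"
  unfolding label_ideal_def
proof (intro allI impI)
  fix i j
  assume "0 < i" "i < j" "j \<le> n" "m_lab j \<in> m_labs k"
  then obtain j' where "j' \<in> {1..k}" "m_lab j = m_lab j'"
    unfolding m_labs_def by blast
  moreover have "j' \<le> n"
    using \<open>j' \<in> {1..k}\<close> assms by simp
  ultimately have "j \<le> k"
    using m_lab_inj[of j j'] \<open>0 < i\<close> \<open>i < j\<close> \<open>j \<le> n\<close> by auto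
  then show "m_lab i \<in> m_labs k"
    using \<open>0 < i\<close> \<open>i < j\<close> unfolding m_labs_def by auto
qed

lemma label_ideal_Un: "label_ideal A \<Longrightarrow> label_ideal B \<Longrightarrow> label_ideal (A \<union> B)"
  unfolding label_ideal_def by blast

lemma label_ideal_Int: "label_ideal A \<Longrightarrow> label_ideal B \<Longrightarrow> label_ideal (A \<inter> B)"
  unfolding label_ideal_def by blast

lemma label_ideal_insert:
  assumes "label_ideal B" "label_ideal (insert q (insert p B))" "p < q"
  shows "label_ideal (insert p B)"
  unfolding label_ideal_def
proof (intro allI impI)
  fix i j
  assume ij: "0 < i" "i < j" "j \<le> n" "m_lab j \<in> insert p B" "m_lab i < m_lab j"
  show "m_lab i \<in> insert p B"
  proof (cases "m_lab j \<in> B")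
    case True
    then show ?thesis
      using assms(1) ij unfolding label_ideal_def by blast
  next
    case False
    then have "m_lab j = p"
      using ij(4) by simp
    then have "m_lab i \<in> insert q (insert p B)"
      using assms(2) ij unfolding label_ideal_def by blast
    moreover have "m_lab i \<noteq> q"
      using ij(5) \<open>m_lab j = p\<close> assms(3) by simp
    ultimately show ?thesis by simp
  qed
qed

lemma label_ideal_remove_top:
  assumes "Suc k \<le> n" "label_ideal A" "A \<subseteq> m_labs (Suc k)"
  shows "label_ideal (A - {m_lab (Suc k)})"
  unfolding label_ideal_def
proof (intro allI impI)
  fix i j
  assume ij: "0 < i" "i < j" "j \<le> n" "m_lab j \<in> A - {m_lab (Suc k)}" "m_lab i < m_lab j"
  then have "m_lab i \<in> A"
    using assms(2) unfolding label_ideal_def by blast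
  have "m_lab j \<in> m_labs k"
    using assms(3) ij(4) m_labs_Suc by auto
  moreover have "m_lab j \<notin> m_labs k" if "k < j"
    using m_lab_notin_m_labs[of k "j - 1"] that ij(3) by simp
  ultimately have "j \<le> k"
    by (meson not_le)
  then have "m_lab i \<noteq> m_lab (Suc k)"
    using m_lab_inj[of i "Suc k"] ij assms(1) by auto
  with \<open>m_lab i \<in> A\<close> show "m_lab i \<in> A - {m_lab (Suc k)}" by simp
qed

lemma m_lab_min_outside_ideal:
  assumes "Suc k \<le> n" "label_ideal A" "m_lab (Suc k) \<in> A"
    and "l \<in> m_labs (Suc k)" "l \<notin> A - {m_lab (Suc k)}"
  shows "m_lab (Suc k) \<le> l"
proof -
  obtain j where j: "j \<in> {1..Suc k}" "l = m_lab j"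
    using assms(4) unfolding m_labs_def by blast
  show ?thesis
  proof (rule ccontr)
    assume "\<not> m_lab (Suc k) \<le> l"
    then have "m_lab j < m_lab (Suc k)" "j \<noteq> Suc k"
      using j by auto
    moreover have "0 < j" "j < Suc k"
      using j \<open>j \<noteq> Suc k\<close> by auto
    ultimately have "m_lab j \<in> A"
      using assms(1-3) unfolding label_ideal_def by blast
    then show False
      using assms(5) j \<open>m_lab j < m_lab (Suc k)\<close> by simp
  qed
qed

lemma subset_m_labs_SucD: "A \<subseteq> m_labs (Suc k) \<Longrightarrow> A - {m_lab (Suc k)} \<subseteq> m_labs k"
  using m_labs_Suc by blast

lemma m_lab_Suc_least_label:
  assumes "Suc k \<le> n" "label_ideal A" "A \<subseteq> m_labs (Suc k)" "m_lab (Suc k) \<in> A"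
    and "u \<le> m ! k" "down_labels u = A - {m_lab (Suc k)}"
  shows "u < m ! Suc k"
    and "m_lab (Suc k) \<in> labels u (m ! Suc k)"
    and "l \<in> labels u (m ! Suc k) \<Longrightarrow> m_lab (Suc k) \<le> l"
proof -
  have "m ! k \<le> m ! Suc k"
    using covers_less[OF max_chain_covers[OF max_chain_m]] assms(1) by (simp add: less_imp_le)
  then have u_le: "u \<le> m ! Suc k"
    using assms(5) by (rule order.trans[rotated])
  then have labels_eq: "labels u (m ! Suc k) = m_labs (Suc k) - (A - {m_lab (Suc k)})"
    using labels_eq_diff down_labels_nth_m assms(1,6) by simp
  then show p_mem: "m_lab (Suc k) \<in> labels u (m ! Suc k)"
    by (simp add: m_labs_Suc)
  then show "u < m ! Suc k"
    using u_le by (metis empty_iff labels_refl order.order_iff_strict)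
  show "l \<in> labels u (m ! Suc k) \<Longrightarrow> m_lab (Suc k) \<le> l"
    using m_lab_min_outside_ideal[OF assms(1,2,4)] labels_eq by simp
qed

text \<open>If \<open>A\<close> contains the label of the \<open>k+1\<close>-st cover of \<open>m\<close>, that label is the smallest one
  still missing below \<open>m ! Suc k\<close>, so it is added by the first step of an increasing chain.\<close>
fun ideal_elem :: "nat \<Rightarrow> nat set \<Rightarrow> 'a" where
  "ideal_elem 0 A = least"
| "ideal_elem (Suc k) A =
    (if m_lab (Suc k) \<in> A then first_step (ideal_elem k (A - {m_lab (Suc k)})) (m ! Suc k)
     else ideal_elem k A)"

lemma ideal_elem_le_nth_m_and_down_labels:
  "k \<le> n \<Longrightarrow> label_ideal A \<Longrightarrow> A \<subseteq> m_labs k \<Longrightarrow>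
    ideal_elem k A \<le> m ! k \<and> down_labels (ideal_elem k A) = A"
proof (induction k arbitrary: A)
  case 0
  then show ?case
    using max_chain_nth_0[OF max_chain_m] by simp
next
  case (Suc k)
  let ?p = "m_lab (Suc k)" and ?x = "m ! Suc k"
  have "m ! k \<le> ?x"
    using covers_less[OF max_chain_covers[OF max_chain_m]] Suc.prems(1) by (simp add: less_imp_le)
  show ?case
  proof (cases "?p \<in> A")
    case False
    then have "A \<subseteq> m_labs k"
      using Suc.prems(3) subset_m_labs_SucD[of A k] by auto
    then show ?thesis
      using Suc False \<open>m ! k \<le> ?x\<close> by (auto intro: order.trans)
  next
    case True
    let ?u = "ideal_elem k (A - {?p})"
    let ?w = "first_step ?u ?x"
    have "?u \<le> m ! k" "down_labels ?u = A - {?p}"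
      using Suc label_ideal_remove_top subset_m_labs_SucD by simp_all
    note least_label = m_lab_Suc_least_label[OF Suc.prems True this]
    have "lab ?u ?w = ?p"
      using lab_first_step_le[OF least_label(1) least_label(2)]
        least_label(3)[OF lab_first_step_mem[OF least_label(1)]] by simp
    then have "down_labels ?w = A"
      using down_labels_covers[OF covers_first_step[OF least_label(1)]]
        \<open>down_labels ?u = A - {?p}\<close> True by auto
    then show ?thesis
      using True first_step_le[OF least_label(1)] by simp
  qed
qed

lemma down_labels_ideal_elem:
  "k \<le> n \<Longrightarrow> label_ideal A \<Longrightarrow> A \<subseteq> m_labs k \<Longrightarrow> down_labels (ideal_elem k A) = A"
  using ideal_elem_le_nth_m_and_down_labels by blast

lemma ideal_elem_le_nth_m:
  "k \<le> n \<Longrightarrow> label_ideal A \<Longrightarrow> A \<subseteq> m_labs k \<Longrightarrow> ideal_elem k A \<le> m ! k"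
  using ideal_elem_le_nth_m_and_down_labels by blast

lemma ideal_elem_mono:
  "k \<le> n \<Longrightarrow> label_ideal A \<Longrightarrow> label_ideal B \<Longrightarrow> A \<subseteq> B \<Longrightarrow> B \<subseteq> m_labs k \<Longrightarrow>
    ideal_elem k A \<le> ideal_elem k B"
proof (induction k arbitrary: A B)
  case (Suc k)
  let ?p = "m_lab (Suc k)" and ?x = "m ! Suc k"
  have A_sub: "A \<subseteq> m_labs (Suc k)"
    using Suc.prems by blast
  consider "?p \<notin> B" | "?p \<in> B" "?p \<notin> A" | "?p \<in> A" "?p \<in> B"
    using Suc.prems(4) by blast
  then show ?case
  proof cases
    case 1
    then show ?thesis
      using Suc subset_m_labs_SucD[of B k] by auto
  next
    case 2
    let ?u' = "ideal_elem k (B - {?p})"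
    have ideal_B': "label_ideal (B - {?p})" "B - {?p} \<subseteq> m_labs k"
      using Suc.prems label_ideal_remove_top subset_m_labs_SucD by simp_all
    then have "?u' \<le> m ! k" "down_labels ?u' = B - {?p}"
      using Suc.prems(1) ideal_elem_le_nth_m down_labels_ideal_elem by simp_all
    note least_label = m_lab_Suc_least_label[OF Suc.prems(1,3,5) 2(1) this]
    have "ideal_elem k A \<le> ?u'"
      using Suc 2 ideal_B' subset_m_labs_SucD[OF A_sub] by auto
    also have "?u' \<le> first_step ?u' ?x"
      using covers_less[OF covers_first_step[OF least_label(1)]] by simp
    finally show ?thesis
      using 2 by simp
  next
    case 3
    let ?u = "ideal_elem k (A - {?p})" and ?u' = "ideal_elem k (B - {?p})"
    let ?w' = "first_step ?u' ?x"
    have ideal_A': "label_ideal (A - {?p})" "A - {?p} \<subseteq> m_labs k"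
      using Suc.prems A_sub label_ideal_remove_top subset_m_labs_SucD by simp_all
    have ideal_B': "label_ideal (B - {?p})" "B - {?p} \<subseteq> m_labs k"
      using Suc.prems label_ideal_remove_top subset_m_labs_SucD by simp_all
    have u: "?u \<le> m ! k" "down_labels ?u = A - {?p}"
      using Suc.prems(1) ideal_A' ideal_elem_le_nth_m down_labels_ideal_elem by simp_all
    have u': "?u' \<le> m ! k" "down_labels ?u' = B - {?p}"
      using Suc.prems(1) ideal_B' ideal_elem_le_nth_m down_labels_ideal_elem by simp_all
    note least_label = m_lab_Suc_least_label[OF Suc.prems(1,2) A_sub 3(1) u]
    note least_label' = m_lab_Suc_least_label[OF Suc.prems(1,3,5) 3(2) u']
    have "?u \<le> ?u'"
      using Suc.IH[OF _ ideal_A'(1) ideal_B'(1) _ ideal_B'(2)] Suc.prems(1,4) by auto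
    then have "?u < ?w'"
      using covers_less[OF covers_first_step[OF least_label'(1)]] by simp
    moreover have "down_labels ?w' = B"
      using down_labels_ideal_elem[OF Suc.prems(1,3,5)] 3 by simp
    then have "?p \<in> labels ?u ?w'"
      using labels_eq_diff[OF less_imp_le[OF \<open>?u < ?w'\<close>]] u(2) 3 by simp
    ultimately have "first_step ?u ?w' = first_step ?u ?x"
      using first_step_eq_if_min_label first_step_le[OF least_label'(1)] least_label(3) by blast
    then show ?thesis
      using 3 first_step_le[OF \<open>?u < ?w'\<close>] by simp
  qed
qed simp

lemma ideal_elem_stable: "k \<le> j \<Longrightarrow> j \<le> n \<Longrightarrow> A \<subseteq> m_labs k \<Longrightarrow> ideal_elem j A = ideal_elem k A"
proof (induction j)
  case (Suc j)
  then show ?case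
    using m_lab_notin_m_labs[of k j] by (cases "k = Suc j") auto
qed simp

lemma ideal_elem_m_labs: "k \<le> n \<Longrightarrow> ideal_elem k (m_labs k) = m ! k"
proof (induction k)
  case 0
  then show ?case
    using max_chain_nth_0[OF max_chain_m] by simp
next
  case (Suc k)
  have "m_labs (Suc k) - {m_lab (Suc k)} = m_labs k"
    using m_labs_Suc m_lab_notin_m_labs[of k k] Suc.prems by auto
  then show ?case
    using Suc first_step_covers[OF max_chain_covers[OF max_chain_m]] by (simp add: m_labs_Suc)
qed

section \<open>\<open>Q\<^sub>m\<close> as a lattice of label ideals\<close>

definition ideal_elems :: "'a set" where
  "ideal_elems = ideal_elem n ` {A. label_ideal A \<and> A \<subseteq> m_labs n}"

lemma mem_ideal_elems_iff:
  "x \<in> ideal_elems \<longleftrightarrow> label_ideal (down_labels x) \<and> x = ideal_elem n (down_labels x)"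
  unfolding ideal_elems_def using down_labels_ideal_elem down_labels_subset_m_labs by auto

lemma first_step_mem_ideal_elems:
  assumes "u \<in> ideal_elems" "v \<in> ideal_elems" "covers u y" "covers y v"
  shows "first_step u v \<in> ideal_elems"
proof -
  let ?z = "first_step u v"
  define p q where "p = lab u ?z" and "q = lab ?z v"
  have "p < q"
    unfolding p_def q_def using rank2_first_step_lab_less[OF assms(3,4)] .
  have "u \<le> v"
    using covers_less[OF assms(3)] covers_less[OF assms(4)] by simp
  then have down_v: "down_labels v = insert q (insert p (down_labels u))"
    and "p \<notin> down_labels u" "q \<notin> down_labels u"
    using labels_eq_diff[of u v] down_labels_mono[of u v] rank2_labels_first_step[OF assms(3,4)]
    unfolding p_def q_def by auto
  have ideal_u: "label_ideal (down_labels u)" "u = ideal_elem n (down_labels u)"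
    and ideal_v: "label_ideal (down_labels v)" "v = ideal_elem n (down_labels v)"
    using assms(1,2) mem_ideal_elems_iff by blast+
  define A where "A = insert p (down_labels u)"
  have ideal_A: "label_ideal A" "A \<subseteq> m_labs n"
    using label_ideal_insert[OF ideal_u(1) ideal_v(1)[unfolded down_v] \<open>p < q\<close>]
      down_labels_subset_m_labs[of v] down_v unfolding A_def by auto
  define e where "e = ideal_elem n A"
  have down_e: "down_labels e = A"
    unfolding e_def using down_labels_ideal_elem ideal_A by simp
  have "u \<le> e" "e \<le> v"
    unfolding e_def using ideal_elem_mono ideal_A ideal_u ideal_v down_labels_subset_m_labs down_v
    unfolding A_def by (metis order.refl subset_insertI)+
  then have "covers u e" "covers e v"
    using covers_if_card_down_labels down_e down_v \<open>p \<notin> down_labels u\<close> \<open>q \<notin> down_labels u\<close>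
      \<open>p < q\<close> unfolding A_def by simp_all
  moreover have "lab u e = p" "lab e v = q"
    using down_labels_covers[OF \<open>covers u e\<close>] lab_notin_down_labels[OF \<open>covers u e\<close>]
      down_labels_covers[OF \<open>covers e v\<close>] lab_notin_down_labels[OF \<open>covers e v\<close>]
      down_e down_v \<open>p < q\<close> unfolding A_def by auto
  ultimately have "e = ?z"
    using rank2_first_step_iff \<open>p < q\<close> by simp
  then show ?thesis
    using down_e ideal_A mem_ideal_elems_iff e_def by simp
qed

lemma max_chain_M_chains: "c \<in> M_chains n lab m \<Longrightarrow> max_chain c"
proof (induction rule: M_chains.induct)
  case base
  then show ?case by (rule max_chain_m)
next
  case (step c i)
  then show ?case
    using max_chain_U_op by simp
qed

lemma nth_m_mem_ideal_elems: "r \<le> n \<Longrightarrow> m ! r \<in> ideal_elems"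
  unfolding mem_ideal_elems_iff
  using down_labels_nth_m label_ideal_m_labs ideal_elem_stable[of r n "m_labs r"] ideal_elem_m_labs
  by simp

lemma M_chains_subset_ideal_elems: "c \<in> M_chains n lab m \<Longrightarrow> set c \<subseteq> ideal_elems"
proof (induction rule: M_chains.induct)
  case base
  show ?case
    using nth_m_mem_ideal_elems length_m by (auto simp: set_conv_nth)
next
  case (step c i)
  then have c: "max_chain c" "0 < i" "i < n"
    using max_chain_M_chains by auto
  then have "length c = Suc n"
    using length_max_chain by blast
  then have "first_step (c ! (i - 1)) (c ! Suc i) \<in> ideal_elems"
    using step.IH c max_chain_covers[OF c(1), of "i - 1"] max_chain_covers[OF c(1), of i]
    by (intro first_step_mem_ideal_elems) auto
  then show ?case
    using step.IH set_update_subset_insert U_op_eq[OF c] by fastforce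
qed

lemma M_chains_remove_descents:
  assumes "c \<in> M_chains n lab m" "r < s" "s \<le> n"
  obtains d where "d \<in> M_chains n lab m" "\<forall>j\<le>n. j \<le> r \<or> s \<le> j \<longrightarrow> d ! j = c ! j"
    "\<And>i. r < i \<Longrightarrow> i < s \<Longrightarrow> lab (d ! (i - 1)) (d ! i) \<le> lab (d ! i) (d ! Suc i)"
proof -
  define T where "T = {d \<in> M_chains n lab m. \<forall>j\<le>n. j \<le> r \<or> s \<le> j \<longrightarrow> d ! j = c ! j}"
  have "T \<subseteq> {d. set d \<subseteq> UNIV \<and> length d = Suc n}"
    unfolding T_def using max_chain_M_chains length_max_chain by blast
  then have "finite T"
    using finite_lists_length_eq[OF finite_UNIV] finite_subset by blast
  moreover have "c \<in> T"
    unfolding T_def using assms(1) by simp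
  ultimately obtain d where d: "d \<in> T" and "label_weight d = Max (label_weight ` T)"
    using Max_in[of "label_weight ` T"] by (metis empty_iff finite_imageI image_iff)
  then have d_max: "label_weight d' \<le> label_weight d" if "d' \<in> T" for d'
    using that \<open>finite T\<close> by simp
  have "lab (d ! (i - 1)) (d ! i) \<le> lab (d ! i) (d ! Suc i)" if "r < i" "i < s" for i
  proof (rule ccontr)
    assume descent: "\<not> lab (d ! (i - 1)) (d ! i) \<le> lab (d ! i) (d ! Suc i)"
    have i: "0 < i" "i < n"
      using that assms by auto
    have "d \<in> M_chains n lab m" "max_chain d"
      using d max_chain_M_chains unfolding T_def by auto
    then have "U_op lab i d \<in> T"
      using d M_chains.step[of d n lab m i] i that U_op_eq[OF \<open>max_chain d\<close> i]
      unfolding T_def by auto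
    then show False
      using d_max label_weight_U_op_less[OF \<open>max_chain d\<close> i] descent by fastforce
  qed
  then show ?thesis
    using that d unfolding T_def by blast
qed

lemma max_chain_no_descents_first_step:
  assumes "max_chain (d :: 'a list)" "r < s" "s \<le> n"
    and "\<And>i. r < i \<Longrightarrow> i < s \<Longrightarrow> lab (d ! (i - 1)) (d ! i) \<le> lab (d ! i) (d ! Suc i)"
  shows "d ! Suc r = first_step (d ! r) (d ! s)"
proof -
  let ?seg = "drop r (take (Suc s) d)"
  have len: "length d = Suc n"
    using assms(1) length_max_chain by blast
  have seg: "interval_max_chain (d ! r) (d ! s) ?seg"
    using assms(1-3) len max_chain_iff interval_max_chain_segment[of d r s]
    unfolding interval_max_chain_def by simp
  have "sorted (chain_labels lab ?seg)"
    unfolding sorted_iff_nth_Suc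
  proof (intro allI impI)
    fix j
    assume "Suc j < length (chain_labels lab ?seg)"
    then have "Suc j < s - r"
      using len assms(3) by (simp add: length_chain_labels)
    then show "chain_labels lab ?seg ! j \<le> chain_labels lab ?seg ! Suc j"
      using assms(3) assms(4)[of "r + Suc j"] len by (simp add: nth_chain_labels)
  qed
  then have "?seg = increasing_chain (d ! r) (d ! s)"
    using seg increasing_chain_unique by blast
  then have "first_step (d ! r) (d ! s) = ?seg ! 1"
    by (simp add: first_step_def)
  then show ?thesis
    using assms(2,3) len by simp
qed

lemma M_chains_sort_segment:
  assumes "c \<in> M_chains n lab m" "r < s" "s \<le> n"
  obtains d where "d \<in> M_chains n lab m" "\<forall>j\<le>n. j \<le> r \<or> s \<le> j \<longrightarrow> d ! j = c ! j"
    "d ! Suc r = first_step (c ! r) (c ! s)"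
proof -
  obtain d where d: "d \<in> M_chains n lab m" "\<forall>j\<le>n. j \<le> r \<or> s \<le> j \<longrightarrow> d ! j = c ! j"
    "\<And>i. r < i \<Longrightarrow> i < s \<Longrightarrow> lab (d ! (i - 1)) (d ! i) \<le> lab (d ! i) (d ! Suc i)"
    using M_chains_remove_descents[OF assms] by blast
  moreover have "d ! Suc r = first_step (d ! r) (d ! s)"
    using max_chain_no_descents_first_step[OF max_chain_M_chains[OF d(1)] assms(2,3) d(3)] .
  ultimately show ?thesis
    using that assms(2,3) by simp
qed

lemma ideal_elem_on_M_chain:
  "k \<le> n \<Longrightarrow> label_ideal A \<Longrightarrow> A \<subseteq> m_labs k \<Longrightarrow>
    \<exists>c\<in>M_chains n lab m. (\<exists>r\<le>n. c ! r = ideal_elem k A) \<and> (\<forall>j. k \<le> j \<longrightarrow> j \<le> n \<longrightarrow> c ! j = m ! j)"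
proof (induction k arbitrary: A)
  case 0
  have "m ! 0 = ideal_elem 0 A"
    using max_chain_nth_0[OF max_chain_m] by simp
  then show ?case
    using M_chains.base by blast
next
  case (Suc k)
  let ?p = "m_lab (Suc k)"
  show ?case
  proof (cases "?p \<in> A")
    case False
    then have "A \<subseteq> m_labs k"
      using Suc.prems(3) subset_m_labs_SucD[of A k] by auto
    then obtain c r where "c \<in> M_chains n lab m" "r \<le> n" "c ! r = ideal_elem k A"
      "\<forall>j. k \<le> j \<longrightarrow> j \<le> n \<longrightarrow> c ! j = m ! j"
      using Suc.IH[OF Suc_leD[OF Suc.prems(1)] Suc.prems(2)] by blast
    then show ?thesis
      using False by (intro bexI[of _ c]) auto
  next
    case True
    let ?A' = "A - {?p}"
    have A': "label_ideal ?A'" "?A' \<subseteq> m_labs k"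
      using Suc.prems label_ideal_remove_top subset_m_labs_SucD by simp_all
    then obtain c r where c: "c \<in> M_chains n lab m" "r \<le> n" "c ! r = ideal_elem k ?A'"
      "\<forall>j. k \<le> j \<longrightarrow> j \<le> n \<longrightarrow> c ! j = m ! j"
      using Suc.IH[OF Suc_leD[OF Suc.prems(1)] A'] by blast
    have "card ?A' = r"
      using card_down_labels_max_chain[OF max_chain_M_chains[OF c(1)] c(2)] c(3)
        down_labels_ideal_elem[of k ?A'] A' Suc.prems(1) by simp
    moreover have "card ?A' \<le> k"
      using card_mono[OF finite_m_labs A'(2)] card_m_labs Suc.prems(1) by simp
    ultimately have "r < Suc k" by simp
    then obtain d where d: "d \<in> M_chains n lab m" "\<forall>j\<le>n. j \<le> r \<or> Suc k \<le> j \<longrightarrow> d ! j = c ! j"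
      "d ! Suc r = first_step (c ! r) (c ! Suc k)"
      using M_chains_sort_segment[OF c(1) _ Suc.prems(1)] by blast
    have "d ! Suc r = ideal_elem (Suc k) A"
      using d(3) c(3,4) True Suc.prems(1) by simp
    moreover have "Suc r \<le> n"
      using \<open>r < Suc k\<close> Suc.prems(1) by simp
    moreover have "\<forall>j. Suc k \<le> j \<longrightarrow> j \<le> n \<longrightarrow> d ! j = m ! j"
      using d(2) c(4) by simp
    ultimately show ?thesis
      using d(1) by blast
  qed
qed

theorem Q_set_eq_ideal_elems: "Q_set n lab m = ideal_elems"
proof
  show "Q_set n lab m \<subseteq> ideal_elems"
    unfolding Q_set_def using M_chains_subset_ideal_elems by blast
next
  show "ideal_elems \<subseteq> Q_set n lab m"
  proof
    fix x
    assume "x \<in> ideal_elems"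
    then obtain A where "x = ideal_elem n A" "label_ideal A" "A \<subseteq> m_labs n"
      unfolding ideal_elems_def by blast
    then obtain c r where "c \<in> M_chains n lab m" "r \<le> n" "c ! r = x"
      using ideal_elem_on_M_chain[of n A] by blast
    moreover have "length c = Suc n"
      using max_chain_M_chains length_max_chain \<open>c \<in> M_chains n lab m\<close> by blast
    ultimately have "x \<in> set c"
      using nth_mem[of r c] by simp
    then show "x \<in> Q_set n lab m"
      unfolding Q_set_def using \<open>c \<in> M_chains n lab m\<close> by blast
  qed
qed

lemma sup_ideal_elem:
  assumes "label_ideal A" "A \<subseteq> m_labs n" "label_ideal B" "B \<subseteq> m_labs n"
  shows "sup (ideal_elem n A) (ideal_elem n B) = ideal_elem n (A \<union> B)"
proof -
  let ?x = "ideal_elem n A" and ?y = "ideal_elem n B" and ?e = "ideal_elem n (A \<union> B)"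
  have ideal: "label_ideal (A \<union> B)" "A \<union> B \<subseteq> m_labs n"
    using assms label_ideal_Un by auto
  have "?x \<le> ?e" "?y \<le> ?e"
    using ideal_elem_mono assms ideal by blast+
  then have "sup ?x ?y \<le> ?e" by simp
  moreover have "down_labels ?e \<subseteq> down_labels (sup ?x ?y)"
    using down_labels_ideal_elem ideal assms down_labels_mono[of ?x "sup ?x ?y"]
      down_labels_mono[of ?y "sup ?x ?y"] by simp
  ultimately show ?thesis
    by (rule down_labels_antisym)
qed

lemma inf_ideal_elem:
  assumes "label_ideal A" "A \<subseteq> m_labs n" "label_ideal B" "B \<subseteq> m_labs n"
  shows "inf (ideal_elem n A) (ideal_elem n B) = ideal_elem n (A \<inter> B)"
proof -
  let ?x = "ideal_elem n A" and ?y = "ideal_elem n B" and ?e = "ideal_elem n (A \<inter> B)"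
  have ideal: "label_ideal (A \<inter> B)" "A \<inter> B \<subseteq> m_labs n"
    using assms label_ideal_Int by auto
  have "?e \<le> ?x" "?e \<le> ?y"
    using ideal_elem_mono assms ideal by blast+
  then have "?e \<le> inf ?x ?y" by simp
  moreover have "down_labels (inf ?x ?y) \<subseteq> down_labels ?e"
    using down_labels_ideal_elem ideal assms down_labels_mono[of "inf ?x ?y" ?x]
      down_labels_mono[of "inf ?x ?y" ?y] by simp
  ultimately have "?e = inf ?x ?y"
    by (rule down_labels_antisym)
  then show ?thesis ..
qed

lemma
  assumes "x \<in> ideal_elems" "y \<in> ideal_elems"
  shows sup_mem_ideal_elems: "sup x y \<in> ideal_elems"
    and inf_mem_ideal_elems: "inf x y \<in> ideal_elems"
proof -
  obtain A B where "label_ideal A" "A \<subseteq> m_labs n" "x = ideal_elem n A"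
    and "label_ideal B" "B \<subseteq> m_labs n" "y = ideal_elem n B"
    using assms unfolding ideal_elems_def by blast
  then show "sup x y \<in> ideal_elems" "inf x y \<in> ideal_elems"
    unfolding ideal_elems_def using sup_ideal_elem inf_ideal_elem label_ideal_Un label_ideal_Int
    by auto
qed

lemma ideal_elems_distrib:
  assumes "x \<in> ideal_elems" "y \<in> ideal_elems" "z \<in> ideal_elems"
  shows "inf x (sup y z) = sup (inf x y) (inf x z)"
proof -
  obtain A B C where ideals: "label_ideal A" "label_ideal B" "label_ideal C"
    and subsets: "A \<subseteq> m_labs n" "B \<subseteq> m_labs n" "C \<subseteq> m_labs n"
    and "x = ideal_elem n A" "y = ideal_elem n B" "z = ideal_elem n C"
    using assms unfolding ideal_elems_def by blast
  then show ?thesis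
    using sup_ideal_elem inf_ideal_elem label_ideal_Un label_ideal_Int
    by (simp add: Int_Un_distrib Un_mono le_infI1)
qed

end

theorem mainTheorem7:
  fixes lab :: "'a::{finite, lattice} \<Rightarrow> 'a \<Rightarrow> nat" and n :: nat and m :: "'a list"
  assumes "graded_rank TYPE('a) n"
    and "Sn_EL_labeling n lab"
    and "max_chain m"
  shows "(\<forall>x\<in>Q_set n lab m. \<forall>y\<in>Q_set n lab m.
            sup x y \<in> Q_set n lab m \<and> inf x y \<in> Q_set n lab m)
       \<and> (\<forall>x\<in>Q_set n lab m. \<forall>y\<in>Q_set n lab m. \<forall>z\<in>Q_set n lab m.
            inf x (sup y z) = sup (inf x y) (inf x z))"
proof -
  interpret Sn_EL_chain lab n m
    using assms by unfold_locales
  show ?thesis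
    unfolding Q_set_eq_ideal_elems
    using sup_mem_ideal_elems inf_mem_ideal_elems ideal_elems_distrib by blast
qed

end
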